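(* Let $\mathcal{LS}_{\mathfrak{A}_1}\langle X\rangle$ be the free algebra over a field of characteristic $0$ in the variety of left-symmetric algebras satisfying $(ab)c+(ba)c+(ac)b+(ca)b+(bc)a+(cb)a=0$, and equip it with the commutator $[a,b]=ab-ba$. Then every polynomial identity of degree at most $4$ satisfied by $(\mathcal{LS}_{\mathfrak{A}_1}\langle X\rangle,[\cdot,\cdot])$ is a consequence of anticommutativity and the Jacobi identity.
   Context: A left-symmetric algebra is an algebra with $(a,b,c)=(b,a,c)$, where $(a,b,c)=(ab)c-a(bc)$. *)

theory Defs
  imports Main
begin

text \<open>Formal nonassociative polynomials (without constant term) over a field 'k
  in countably many variables V 0, V 1, ...  They are syntax trees; equality in a
  given variety is the equational-logic derivability relation below.\<close>

datatype 'k nterm =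
    V nat
  | Z
  | Plus "'k nterm" "'k nterm"
  | Sc 'k "'k nterm"
  | Times "'k nterm" "'k nterm"

definition Minus :: "('k::field) nterm \<Rightarrow> 'k nterm \<Rightarrow> 'k nterm" where
  "Minus a b = Plus a (Sc (-1) b)"

text \<open>For ax closed under
  substitution this is membership in the T-ideal generated by the identities.\<close>

inductive deriv :: "(('k::field) nterm \<Rightarrow> bool) \<Rightarrow> 'k nterm \<Rightarrow> 'k nterm \<Rightarrow> bool"
  for ax :: "'k nterm \<Rightarrow> bool" where
  refl: "deriv ax a a"
| sym: "deriv ax a b \<Longrightarrow> deriv ax b a"
| trans: "deriv ax a b \<Longrightarrow> deriv ax b c \<Longrightarrow> deriv ax a c"
| cong_plus: "deriv ax a a' \<Longrightarrow> deriv ax b b' \<Longrightarrow> deriv ax (Plus a b) (Plus a' b')"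
| cong_sc: "deriv ax a a' \<Longrightarrow> deriv ax (Sc c a) (Sc c a')"
| cong_times: "deriv ax a a' \<Longrightarrow> deriv ax b b' \<Longrightarrow> deriv ax (Times a b) (Times a' b')"
| plus_assoc: "deriv ax (Plus (Plus a b) c) (Plus a (Plus b c))"
| plus_comm: "deriv ax (Plus a b) (Plus b a)"
| plus_zero: "deriv ax (Plus a Z) a"
| plus_neg: "deriv ax (Plus a (Sc (-1) a)) Z"
| sc_plus: "deriv ax (Sc c (Plus a b)) (Plus (Sc c a) (Sc c b))"
| sc_add: "deriv ax (Sc (c + d) a) (Plus (Sc c a) (Sc d a))"
| sc_mult: "deriv ax (Sc c (Sc d a)) (Sc (c * d) a)"
| sc_one: "deriv ax (Sc 1 a) a"
| times_plus_left: "deriv ax (Times (Plus a b) c) (Plus (Times a c) (Times b c))"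
| times_plus_right: "deriv ax (Times a (Plus b c)) (Plus (Times a b) (Times a c))"
| times_sc_left: "deriv ax (Times (Sc c a) b) (Sc c (Times a b))"
| times_sc_right: "deriv ax (Times a (Sc c b)) (Sc c (Times a b))"
| axiom: "ax t \<Longrightarrow> deriv ax t Z"

definition assoc_t :: "('k::field) nterm \<Rightarrow> 'k nterm \<Rightarrow> 'k nterm \<Rightarrow> 'k nterm" where
  "assoc_t a b c = Minus (Times (Times a b) c) (Times a (Times b c))"

definition LS_A1_ax :: "('k::field) nterm \<Rightarrow> bool" where
  "LS_A1_ax t \<longleftrightarrow> (\<exists>a b c.
      t = Minus (assoc_t a b c) (assoc_t b a c)
    \<or> t = Plus (Plus (Plus (Plus (Plus (Times (Times a b) c) (Times (Times b a) c))
                    (Times (Times a c) b)) (Times (Times c a) b))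
                    (Times (Times b c) a)) (Times (Times c b) a))"

definition Lie_ax :: "('k::field) nterm \<Rightarrow> bool" where
  "Lie_ax t \<longleftrightarrow> (\<exists>a b c.
      t = Plus (Times a b) (Times b a)
    \<or> t = Plus (Plus (Times (Times a b) c) (Times (Times b c) a)) (Times (Times c a) b))"

fun comm_eval :: "(nat \<Rightarrow> ('k::field) nterm) \<Rightarrow> 'k nterm \<Rightarrow> 'k nterm" where
  "comm_eval \<sigma> (V n) = \<sigma> n"
| "comm_eval \<sigma> Z = Z"
| "comm_eval \<sigma> (Plus a b) = Plus (comm_eval \<sigma> a) (comm_eval \<sigma> b)"
| "comm_eval \<sigma> (Sc c a) = Sc c (comm_eval \<sigma> a)"
| "comm_eval \<sigma> (Times a b) =
     Minus (Times (comm_eval \<sigma> a) (comm_eval \<sigma> b)) (Times (comm_eval \<sigma> b) (comm_eval \<sigma> a))"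

text \<open>Syntactic degree (an upper bound for the degree of the polynomial represented;
  every polynomial of degree d has a representative of syntactic degree d).\<close>
fun tdeg :: "'k nterm \<Rightarrow> nat" where
  "tdeg (V n) = 1"
| "tdeg Z = 0"
| "tdeg (Plus a b) = max (tdeg a) (tdeg b)"
| "tdeg (Sc c a) = tdeg a"
| "tdeg (Times a b) = tdeg a + tdeg b"

end

theory Submission
  imports Defs "HOL-Library.Function_Algebras"
begin

text \<open>
  Left-symmetric algebras are Lie-admissible, so the Lie identities do hold in the
  commutator algebra. Conversely, over a field of characteristic 0 a Lie polynomial t is
  determined by its associative expansion: by the Dynkin-Specht-Wever lemma, t is the sum
  of c(w) / |w| [w] over all words w, where [w] is the left-normed bracket of w and c(w)
  the coefficient of w in the expansion of t. It therefore suffices to detect every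
  coefficient c(w) with |w| \<le> 4 by an evaluation in the commutator algebra of an LS_A1
  algebra. For each n \<le> 4 a nilpotent LS_A1 algebra with n generators does this:
  substituting the j-th generator for the j-th letter of w, one fixed coordinate of a
  left-normed bracket [u] is the coefficient of w in the expansion of [u].
\<close>

lemma sum_list_concat_map: "sum_list (concat (map f xs)) = (\<Sum>x\<leftarrow>xs. sum_list (f x))"
  by (induction xs) simp_all

lemma sum_list_map_cong: "(\<And>x. x \<in> set xs \<Longrightarrow> f x = g x) \<Longrightarrow> (\<Sum>x\<leftarrow>xs. f x) = (\<Sum>x\<leftarrow>xs. g x)"
  by (metis map_cong)

lemma sum_list_apply: "sum_list fs x = (\<Sum>f\<leftarrow>fs. f x)"
  by (induction fs) simp_all

section \<open>Nonassociative algebras over a field\<close>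

locale k_algebra =
  fixes scale :: "'k::field \<Rightarrow> 'a::ab_group_add \<Rightarrow> 'a"
    and mult :: "'a \<Rightarrow> 'a \<Rightarrow> 'a"
  assumes scale_add_right: "scale c (x + y) = scale c x + scale c y"
    and scale_add_left: "scale (c + d) x = scale c x + scale d x"
    and scale_scale [simp]: "scale c (scale d x) = scale (c * d) x"
    and scale_one [simp]: "scale 1 x = x"
    and mult_add_left: "mult (x + y) z = mult x z + mult y z"
    and mult_add_right: "mult x (y + z) = mult x y + mult x z"
    and mult_scale_left: "mult (scale c x) y = scale c (mult x y)"
    and mult_scale_right: "mult x (scale c y) = scale c (mult x y)"
begin

lemma scale_zero_left [simp]: "scale 0 x = 0"
  using scale_add_left [of 0 0 x] by simp

lemma scale_zero_right [simp]: "scale c 0 = 0"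
  using scale_add_right [of c 0 0] by simp

lemma scale_minus_one: "scale (- 1) x = - x"
  using scale_add_left [of "- 1" 1 x] by (simp add: eq_neg_iff_add_eq_0)

lemma scale_minus_left: "scale (- c) x = - scale c x"
  by (metis scale_minus_one scale_scale mult_minus1)

lemma scale_minus_right: "scale c (- x) = - scale c x"
  by (metis scale_minus_one scale_scale mult.commute)

lemma scale_diff_right: "scale c (x - y) = scale c x - scale c y"
  by (simp only: diff_conv_add_uminus scale_add_right scale_minus_right)

lemma scale_sum_list: "scale c (sum_list xs) = (\<Sum>x\<leftarrow>xs. scale c x)"
  by (induction xs) (simp_all add: scale_add_right)

lemma mult_zero_left [simp]: "mult 0 y = 0"
  using mult_scale_left [of 0 0 y] by simp

lemma mult_zero_right [simp]: "mult x 0 = 0"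
  using mult_scale_right [of x 0 0] by simp

lemma mult_minus_left: "mult (- x) y = - mult x y"
  by (metis mult_scale_left scale_minus_one)

lemma mult_minus_right: "mult x (- y) = - mult x y"
  by (metis mult_scale_right scale_minus_one)

lemma mult_diff_left: "mult (x - y) z = mult x z - mult y z"
  by (simp only: diff_conv_add_uminus mult_add_left mult_minus_left)

lemma mult_diff_right: "mult x (y - z) = mult x y - mult x z"
  by (simp only: diff_conv_add_uminus mult_add_right mult_minus_right)

lemma mult_sum_list_left: "mult (sum_list xs) y = (\<Sum>x\<leftarrow>xs. mult x y)"
  by (induction xs) (simp_all add: mult_add_left)

lemma mult_sum_list_right: "mult x (sum_list ys) = (\<Sum>y\<leftarrow>ys. mult x y)"
  by (induction ys) (simp_all add: mult_add_right)

definition associator :: "'a \<Rightarrow> 'a \<Rightarrow> 'a \<Rightarrow> 'a" where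
  "associator x y z = mult (mult x y) z - mult x (mult y z)"

definition commutator :: "'a \<Rightarrow> 'a \<Rightarrow> 'a" where
  "commutator x y = mult x y - mult y x"

lemma k_algebra_commutator: "k_algebra scale commutator"
  by unfold_locales
    (simp_all add: commutator_def scale_add_right scale_add_left mult_add_left mult_add_right
      mult_scale_left mult_scale_right scale_diff_right)

fun eval :: "(nat \<Rightarrow> 'a) \<Rightarrow> 'k nterm \<Rightarrow> 'a" where
  "eval \<rho> (V n) = \<rho> n"
| "eval \<rho> Z = 0"
| "eval \<rho> (Plus s t) = eval \<rho> s + eval \<rho> t"
| "eval \<rho> (Sc c t) = scale c (eval \<rho> t)"
| "eval \<rho> (Times s t) = mult (eval \<rho> s) (eval \<rho> t)"

lemma eval_Minus [simp]: "eval \<rho> (Minus s t) = eval \<rho> s - eval \<rho> t"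
  by (simp add: Minus_def scale_minus_one)

lemma eval_deriv:
  assumes "deriv ax s t" and "\<And>t. ax t \<Longrightarrow> eval \<rho> t = 0"
  shows "eval \<rho> s = eval \<rho> t"
  using assms(1)
  by induction
    (simp_all add: assms(2) scale_minus_one scale_add_right scale_add_left mult_add_left
      mult_add_right mult_scale_left mult_scale_right ac_simps)

lemma eval_comm_eval: "eval \<rho> (comm_eval \<sigma> t) = k_algebra.eval scale commutator (eval \<rho> \<circ> \<sigma>) t"
proof -
  interpret comm: k_algebra scale commutator by (rule k_algebra_commutator)
  show ?thesis by (induction t) (simp_all add: commutator_def [symmetric])
qed

fun ad_word :: "('b \<Rightarrow> 'a) \<Rightarrow> 'a \<Rightarrow> 'b list \<Rightarrow> 'a" where
  "ad_word \<rho> y [] = y"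
| "ad_word \<rho> y (x # xs) = ad_word \<rho> (mult y (\<rho> x)) xs"

fun left_normed :: "('b \<Rightarrow> 'a) \<Rightarrow> 'b list \<Rightarrow> 'a" where
  "left_normed \<rho> [] = 0"
| "left_normed \<rho> (x # xs) = ad_word \<rho> (\<rho> x) xs"

end

locale lie_algebra = k_algebra +
  assumes anticommutative: "mult x y + mult y x = 0"
    and jacobi: "mult (mult x y) z + mult (mult y z) x + mult (mult z x) y = 0"

locale left_symmetric_algebra = k_algebra +
  assumes left_symmetric: "associator x y z = associator y x z"
begin

lemma lie_admissible: "lie_algebra scale commutator"
proof -
  interpret comm: k_algebra scale commutator by (rule k_algebra_commutator)
  show ?thesis
  proof
    fix x y z
    show "commutator x y + commutator y x = 0" by (simp add: commutator_def)
    have "commutator (commutator x y) z + commutator (commutator y z) x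
        + commutator (commutator z x) y
      = (associator x y z - associator y x z) + (associator y z x - associator z y x)
        + (associator z x y - associator x z y)"
      by (simp add: commutator_def associator_def mult_diff_left mult_diff_right algebra_simps)
    then show "commutator (commutator x y) z + commutator (commutator y z) x
        + commutator (commutator z x) y = 0"
      by (simp add: left_symmetric)
  qed
qed

end

locale LS_A1_algebra = left_symmetric_algebra +
  assumes A1_identity: "mult (mult x y) z + mult (mult y x) z + mult (mult x z) y
    + mult (mult z x) y + mult (mult y z) x + mult (mult z y) x = 0"
begin

lemma eval_LS_A1_ax: "LS_A1_ax t \<Longrightarrow> eval \<rho> t = 0"
  unfolding LS_A1_ax_def assoc_t_def
  by (auto simp: A1_identity left_symmetric[unfolded associator_def])

end

section \<open>Left-normed brackets and the Dynkin-Specht-Wever lemma\<close>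

text \<open>
  Signed words represent elements of the free associative algebra; commute_with P x is
  P x - x P, so expand u lists the associative expansion of the left-normed commutator of
  the letters of u. Below, signed_ad \<rho> P lets P act by right multiplications.
\<close>

definition commute_with :: "(int \<times> 'b list) list \<Rightarrow> 'b \<Rightarrow> (int \<times> 'b list) list" where
  "commute_with P x = [(s, w @ [x]). (s, w) \<leftarrow> P] @ [(- s, x # w). (s, w) \<leftarrow> P]"

fun expand :: "'b list \<Rightarrow> (int \<times> 'b list) list" where
  "expand [] = []"
| "expand (x # xs) = foldl commute_with [(1, [x])] xs"

lemma length_foldl_commute_with:
  "\<forall>(s, w) \<in> set P. length w = n
    \<Longrightarrow> \<forall>(s, w) \<in> set (foldl commute_with P xs). length w = n + length xs"
proof (induction xs arbitrary: P n)
  case (Cons x xs)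
  then have "\<forall>(s, w) \<in> set (commute_with P x). length w = Suc n"
    by (auto simp: commute_with_def)
  then show ?case using Cons.IH by fastforce
qed simp

lemma length_expand: "(s, w) \<in> set (expand u) \<Longrightarrow> length w = length u"
proof (cases u)
  case (Cons x xs)
  moreover assume "(s, w) \<in> set (expand u)"
  ultimately show ?thesis
    using length_foldl_commute_with [of "[(1, [x])]" 1 xs] by auto
qed simp

context k_algebra
begin

lemma ad_word_snoc: "ad_word \<rho> y (xs @ [x]) = mult (ad_word \<rho> y xs) (\<rho> x)"
  by (induction xs arbitrary: y) simp_all

lemma left_normed_snoc: "u \<noteq> [] \<Longrightarrow> left_normed \<rho> (u @ [x]) = mult (left_normed \<rho> u) (\<rho> x)"
  by (cases u) (simp_all add: ad_word_snoc)

lemma ad_word_left_normed: "u \<noteq> [] \<Longrightarrow> ad_word \<rho> (left_normed \<rho> u) w = left_normed \<rho> (u @ w)"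
  by (induction w arbitrary: u) (simp_all add: left_normed_snoc flip: left_normed_snoc)

definition signed_ad :: "('b \<Rightarrow> 'a) \<Rightarrow> (int \<times> 'b list) list \<Rightarrow> 'a \<Rightarrow> 'a" where
  "signed_ad \<rho> P y = (\<Sum>(s, w)\<leftarrow>P. scale (of_int s) (ad_word \<rho> y w))"

definition signed_brackets :: "('b \<Rightarrow> 'a) \<Rightarrow> (int \<times> 'b list) list \<Rightarrow> 'a" where
  "signed_brackets \<rho> P = (\<Sum>(s, w)\<leftarrow>P. scale (of_int s) (left_normed \<rho> w))"

lemma signed_ad_single: "signed_ad \<rho> [(1, [x])] y = mult y (\<rho> x)"
  by (simp add: signed_ad_def)

lemma signed_ad_commute_with:
  "signed_ad \<rho> (commute_with P x) y = mult (signed_ad \<rho> P y) (\<rho> x) - signed_ad \<rho> P (mult y (\<rho> x))"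
  by (induction P)
    (auto simp: commute_with_def signed_ad_def ad_word_snoc mult_add_left mult_scale_left
      scale_minus_left)

lemma signed_brackets_commute_with:
  assumes "\<forall>(s, w) \<in> set P. w \<noteq> []"
  shows "signed_brackets \<rho> (commute_with P x)
    = mult (signed_brackets \<rho> P) (\<rho> x) - signed_ad \<rho> P (\<rho> x)"
  using assms
  by (induction P)
    (auto simp: commute_with_def signed_ad_def signed_brackets_def left_normed_snoc mult_add_left
      mult_scale_left scale_minus_left)

end

context lie_algebra
begin

lemma anticommute: "mult x y = - mult y x"
  using anticommutative [of x y] by (simp add: eq_neg_iff_add_eq_0)

lemma mult_mult_right: "mult y (mult x z) = mult (mult y x) z - mult (mult y z) x"
proof -
  have "mult (mult y x) z + mult (mult x z) y + mult (mult z y) x = 0"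
    by (rule jacobi)
  then show ?thesis
    by (simp add: anticommute [of "mult x z" y] anticommute [of z y] mult_minus_left algebra_simps
      eq_neg_iff_add_eq_0)
qed

lemma signed_ad_foldl:
  assumes "\<And>y. signed_ad \<rho> P y = mult y a"
  shows "signed_ad \<rho> (foldl commute_with P xs) y = mult y (ad_word \<rho> a xs)"
  using assms
proof (induction xs arbitrary: P a)
  case (Cons x xs)
  have "signed_ad \<rho> (commute_with P x) y = mult y (mult a (\<rho> x))" for y
    by (simp add: signed_ad_commute_with Cons.prems mult_mult_right)
  then show ?case using Cons.IH by simp
qed simp

lemma signed_brackets_foldl:
  assumes "\<And>y. signed_ad \<rho> P y = mult y a" and "\<forall>(s, w) \<in> set P. w \<noteq> []"
    and "signed_brackets \<rho> P = scale (of_nat n) a"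
  shows "signed_brackets \<rho> (foldl commute_with P xs)
    = scale (of_nat (n + length xs)) (ad_word \<rho> a xs)"
  using assms
proof (induction xs arbitrary: P a n)
  case (Cons x xs)
  have "signed_ad \<rho> (commute_with P x) y = mult y (mult a (\<rho> x))" for y
    by (simp add: signed_ad_commute_with Cons.prems mult_mult_right)
  moreover have "\<forall>(s, w) \<in> set (commute_with P x). w \<noteq> []"
    by (auto simp: commute_with_def)
  moreover have "signed_brackets \<rho> (commute_with P x) = scale (of_nat (Suc n)) (mult a (\<rho> x))"
    by (simp add: signed_brackets_commute_with Cons.prems mult_scale_left anticommute [of "\<rho> x"]
      scale_add_left)
  ultimately show ?case
    using Cons.IH [of "commute_with P x" "mult a (\<rho> x)" "Suc n"] by simp
qed simp

lemma signed_ad_expand: "u \<noteq> [] \<Longrightarrow> signed_ad \<rho> (expand u) y = mult y (left_normed \<rho> u)"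
proof (cases u)
  case (Cons x xs)
  then show ?thesis by (simp add: signed_ad_foldl signed_ad_single)
qed simp

theorem signed_brackets_expand:
  "signed_brackets \<rho> (expand u) = scale (of_nat (length u)) (left_normed \<rho> u)"
proof (cases u)
  case (Cons x xs)
  have "signed_brackets \<rho> [(1, [x])] = scale (of_nat 1) (\<rho> x)"
    by (simp add: signed_brackets_def)
  then show ?thesis
    using Cons signed_brackets_foldl [of \<rho> "[(1, [x])]" "\<rho> x" 1 xs] by (simp add: signed_ad_single)
qed (simp add: signed_brackets_def)

lemma mult_left_normed:
  assumes "u \<noteq> []" and "v \<noteq> []"
  shows "mult (left_normed \<rho> u) (left_normed \<rho> v)
    = (\<Sum>(s, w)\<leftarrow>expand v. scale (of_int s) (left_normed \<rho> (u @ w)))"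
  using signed_ad_expand [OF assms(2), of \<rho> "left_normed \<rho> u"]
  by (simp add: signed_ad_def ad_word_left_normed assms(1) case_prod_beta)

end

section \<open>Left-normed normal form of Lie polynomials\<close>

fun left_normed_form :: "'k::field nterm \<Rightarrow> ('k \<times> nat list) list" where
  "left_normed_form (V n) = [(1, [n])]"
| "left_normed_form Z = []"
| "left_normed_form (Plus s t) = left_normed_form s @ left_normed_form t"
| "left_normed_form (Sc c t) = [(c * e, u). (e, u) \<leftarrow> left_normed_form t]"
| "left_normed_form (Times s t) =
    [(c * e * of_int k, u @ w). (c, u) \<leftarrow> left_normed_form s, (e, v) \<leftarrow> left_normed_form t,
      (k, w) \<leftarrow> expand v]"

lemma left_normed_form_words:
  "(c, u) \<in> set (left_normed_form t) \<Longrightarrow> u \<noteq> [] \<and> length u \<le> tdeg t"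
proof (induction t arbitrary: c u)
  case (Times s t)
  then obtain c' e u' v k w where "(c', u') \<in> set (left_normed_form s)"
    and "(e, v) \<in> set (left_normed_form t)" and "(k, w) \<in> set (expand v)" and "u = u' @ w"
    by auto
  with Times.IH length_expand show ?case by fastforce
qed (fastforce simp: le_max_iff_disj)+

definition assoc_expansion :: "'k::field nterm \<Rightarrow> ('k \<times> nat list) list" where
  "assoc_expansion t = [(c * of_int k, w). (c, u) \<leftarrow> left_normed_form t, (k, w) \<leftarrow> expand u]"

lemma assoc_expansion_words:
  "(a, w) \<in> set (assoc_expansion t) \<Longrightarrow> 1 \<le> length w \<and> length w \<le> tdeg t"
  by (auto simp: assoc_expansion_def Suc_le_eq dest!: left_normed_form_words length_expand)

definition coeff :: "('k::semiring_1 \<times> 'b) list \<Rightarrow> 'b \<Rightarrow> 'k" where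
  "coeff L w = (\<Sum>(a, v)\<leftarrow>L. a * of_bool (v = w))"

context k_algebra
begin

definition combination :: "('b \<Rightarrow> 'a) \<Rightarrow> ('k \<times> 'b list) list \<Rightarrow> 'a" where
  "combination \<rho> L = (\<Sum>(c, u)\<leftarrow>L. scale c (left_normed \<rho> u))"

lemma sum_list_regroup:
  assumes "finite W" and "snd ` set L \<subseteq> W"
  shows "(\<Sum>(a, w)\<leftarrow>L. scale a (g w)) = (\<Sum>w\<in>W. scale (coeff L w) (g w))"
  using assms(2)
proof (induction L)
  case Nil
  then show ?case by (simp add: coeff_def)
next
  case (Cons p L)
  obtain a v where p: "p = (a, v)" by force
  with Cons.prems have "v \<in> W" by simp
  have "scale (coeff (p # L) w) (g w)
      = (if v = w then scale a (g w) else 0) + scale (coeff L w) (g w)" for w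
    by (simp add: p coeff_def scale_add_left)
  then have "(\<Sum>w\<in>W. scale (coeff (p # L) w) (g w))
      = (\<Sum>w\<in>W. if v = w then scale a (g w) else 0) + (\<Sum>w\<in>W. scale (coeff L w) (g w))"
    by (simp add: sum.distrib)
  also have "\<dots> = scale a (g v) + (\<Sum>(a, w)\<leftarrow>L. scale a (g w))"
    using Cons \<open>v \<in> W\<close> assms(1) by simp
  finally show ?case by (simp add: p)
qed

end

lemma (in lie_algebra) eval_left_normed_form: "eval \<rho> t = combination \<rho> (left_normed_form t)"
proof (induction t)
  case (Times s t)
  let ?L = "left_normed_form s" and ?R = "left_normed_form t"
  have "eval \<rho> (Times s t) = (\<Sum>(c, u)\<leftarrow>?L. scale c (mult (left_normed \<rho> u) (combination \<rho> ?R)))"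
    by (simp add: Times.IH combination_def [of \<rho> ?L] mult_sum_list_left mult_scale_left
      split_def o_def)
  also have "\<dots> = (\<Sum>(c, u)\<leftarrow>?L. \<Sum>(e, v)\<leftarrow>?R.
      scale (c * e) (mult (left_normed \<rho> u) (left_normed \<rho> v)))"
    by (simp add: combination_def mult_sum_list_right mult_scale_right scale_sum_list
      split_def o_def)
  also have "\<dots> = (\<Sum>(c, u)\<leftarrow>?L. \<Sum>(e, v)\<leftarrow>?R. \<Sum>(k, w)\<leftarrow>expand v.
      scale (c * e * of_int k) (left_normed \<rho> (u @ w)))"
    by (fastforce intro!: sum_list_map_cong
      simp: mult_left_normed left_normed_form_words scale_sum_list split_def o_def)
  also have "\<dots> = combination \<rho> (left_normed_form (Times s t))"
    by (simp add: combination_def map_concat sum_list_concat_map split_def o_def)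
  finally show ?case .
qed (simp_all add: combination_def scale_sum_list scale_add_right split_def o_def)

locale lie_algebra_char_0 = lie_algebra scale mult
  for scale :: "'k::field_char_0 \<Rightarrow> 'a::ab_group_add \<Rightarrow> 'a" and mult :: "'a \<Rightarrow> 'a \<Rightarrow> 'a"
begin

lemma scale_left_normed_expand:
  assumes "u \<noteq> []"
  shows "scale c (left_normed \<rho> u)
    = (\<Sum>(k, w)\<leftarrow>expand u. scale (c * of_int k / of_nat (length w)) (left_normed \<rho> w))"
proof -
  have "scale c (left_normed \<rho> u)
      = scale (c / of_nat (length u)) (scale (of_nat (length u)) (left_normed \<rho> u))"
    using assms by simp
  also have "\<dots> = scale (c / of_nat (length u)) (signed_brackets \<rho> (expand u))"
    by (simp add: signed_brackets_expand)
  also have "\<dots> = (\<Sum>(k, w)\<leftarrow>expand u. scale (c * of_int k / of_nat (length w)) (left_normed \<rho> w))"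
    unfolding signed_brackets_def scale_sum_list map_map
    by (intro sum_list_map_cong) (auto dest: length_expand)
  finally show ?thesis .
qed

lemma eval_assoc_expansion:
  "eval \<rho> t = (\<Sum>(a, w)\<leftarrow>assoc_expansion t. scale (a / of_nat (length w)) (left_normed \<rho> w))"
proof -
  have "eval \<rho> t = (\<Sum>(c, u)\<leftarrow>left_normed_form t. \<Sum>(k, w)\<leftarrow>expand u.
      scale (c * of_int k / of_nat (length w)) (left_normed \<rho> w))"
    unfolding eval_left_normed_form combination_def
    by (intro sum_list_map_cong) (auto simp: scale_left_normed_expand left_normed_form_words)
  then show ?thesis
    by (simp add: assoc_expansion_def map_concat sum_list_concat_map split_def o_def)
qed

theorem eval_eq_0_if_coeff_eq_0:
  assumes "\<And>w. 1 \<le> length w \<Longrightarrow> length w \<le> tdeg t \<Longrightarrow> coeff (assoc_expansion t) w = 0"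
  shows "eval \<rho> t = 0"
proof -
  define L where "L = [(a / of_nat (length w), w). (a, w) \<leftarrow> assoc_expansion t]"
  have "eval \<rho> t = (\<Sum>(a, w)\<leftarrow>L. scale a (left_normed \<rho> w))"
    by (simp add: eval_assoc_expansion L_def split_def o_def)
  also have "\<dots> = (\<Sum>w\<in>snd ` set L. scale (coeff L w) (left_normed \<rho> w))"
    by (rule sum_list_regroup) auto
  also have "\<dots> = 0"
  proof (rule sum.neutral, rule ballI)
    fix w
    assume "w \<in> snd ` set L"
    then have "1 \<le> length w \<and> length w \<le> tdeg t"
      by (auto simp: L_def dest: assoc_expansion_words)
    moreover have "coeff L w = coeff (assoc_expansion t) w / of_nat (length w)"
      unfolding coeff_def L_def map_map divide_inverse sum_list_mult_const [symmetric]
      by (intro sum_list_map_cong) auto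
    ultimately show "scale (coeff L w) (left_normed \<rho> w) = 0"
      using assms by simp
  qed
  finally show ?thesis .
qed

end

section \<open>The free Lie algebra\<close>

lemma equivp_deriv: "equivp (deriv ax)"
  by (rule equivpI) (auto simp: reflp_def symp_def transp_def intro: deriv.intros)

quotient_type (overloaded) 'k free_lie = "('k::field) nterm" / "deriv Lie_ax"
  by (rule equivp_deriv)

instantiation free_lie :: (field) ab_group_add
begin

lift_definition zero_free_lie :: "'a free_lie" is Z .

lift_definition plus_free_lie :: "'a free_lie \<Rightarrow> 'a free_lie \<Rightarrow> 'a free_lie" is Plus
  by (rule deriv.cong_plus)

lift_definition uminus_free_lie :: "'a free_lie \<Rightarrow> 'a free_lie" is "Sc (- 1)"
  by (rule deriv.cong_sc)

lift_definition minus_free_lie :: "'a free_lie \<Rightarrow> 'a free_lie \<Rightarrow> 'a free_lie" is Minus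
  unfolding Minus_def by (intro deriv.cong_plus deriv.cong_sc)

instance
proof
  fix a b c :: "'a free_lie"
  show "a + b + c = a + (b + c)" by transfer (rule deriv.plus_assoc)
  show "a + b = b + a" by transfer (rule deriv.plus_comm)
  show "0 + a = a" by transfer (meson deriv.plus_comm deriv.plus_zero deriv.trans)
  show "- a + a = 0" by transfer (meson deriv.plus_comm deriv.plus_neg deriv.trans)
  show "a - b = a + - b" by transfer (simp add: Minus_def deriv.refl)
qed

end

lift_definition free_scale :: "'k::field \<Rightarrow> 'k free_lie \<Rightarrow> 'k free_lie" is Sc
  by (rule deriv.cong_sc)

lift_definition free_bracket :: "'k::field free_lie \<Rightarrow> 'k free_lie \<Rightarrow> 'k free_lie" is Times
  by (rule deriv.cong_times)

lift_definition free_gen :: "nat \<Rightarrow> 'k::field free_lie" is V .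

interpretation free: lie_algebra_char_0 free_scale "free_bracket :: 'k::field_char_0 free_lie \<Rightarrow> _"
proof unfold_locales
  fix c d :: 'k and x y z :: "'k free_lie"
  show "free_scale c (x + y) = free_scale c x + free_scale c y" by transfer (rule deriv.sc_plus)
  show "free_scale (c + d) x = free_scale c x + free_scale d x" by transfer (rule deriv.sc_add)
  show "free_scale c (free_scale d x) = free_scale (c * d) x" by transfer (rule deriv.sc_mult)
  show "free_scale 1 x = x" by transfer (rule deriv.sc_one)
  show "free_bracket (x + y) z = free_bracket x z + free_bracket y z"
    by transfer (rule deriv.times_plus_left)
  show "free_bracket x (y + z) = free_bracket x y + free_bracket x z"
    by transfer (rule deriv.times_plus_right)
  show "free_bracket (free_scale c x) y = free_scale c (free_bracket x y)"
    by transfer (rule deriv.times_sc_left)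
  show "free_bracket x (free_scale c y) = free_scale c (free_bracket x y)"
    by transfer (rule deriv.times_sc_right)
  show "free_bracket x y + free_bracket y x = 0"
    by transfer (rule deriv.axiom, auto simp: Lie_ax_def)
  show "free_bracket (free_bracket x y) z + free_bracket (free_bracket y z) x
      + free_bracket (free_bracket z x) y = 0"
    by transfer (rule deriv.axiom, auto simp: Lie_ax_def)
qed

lemma abs_free_lie_eq_eval: "abs_free_lie t = free.eval free_gen t"
  by (induction t)
    (simp_all flip: free_gen.abs_eq zero_free_lie.abs_eq plus_free_lie.abs_eq free_scale.abs_eq
      free_bracket.abs_eq)

section \<open>A test algebra in the variety LS_A1\<close>

text \<open>
  The direct sum of four nilpotent algebras, the n-th one spanned by n generators
  (X0; Y0, Y1; Z0, Z1, Z2; W0, ..., W3) and some of their products, with Yt, Zt, Wt in top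
  degree. A word w of length n is tested by sending its j-th letter to the j-th generator
  of the n-th summand (a repeated letter goes to the sum of its generators) and reading off
  the top coordinate.
\<close>

datatype model_basis = X0 | Y0 | Y1 | Yt | Z0 | Z1 | Z2 | Z01 | Z21 | Zt
  | W0 | W1 | W2 | W3 | W01 | W10 | W21 | W13 | W23 | Wp | Wq | Wr | Wt

type_synonym 'k model = "model_basis \<Rightarrow> 'k"

fun model_mult :: "'k::field_char_0 model \<Rightarrow> 'k model \<Rightarrow> 'k model" where
  "model_mult x y Yt = x Y0 * y Y1"
| "model_mult x y Z01 = x Z0 * y Z1"
| "model_mult x y Z21 = x Z2 * y Z1"
| "model_mult x y Zt = - x Z0 * y Z21 - x Z2 * y Z01"
| "model_mult x y W01 = x W0 * y W1"
| "model_mult x y W10 = x W1 * y W0"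
| "model_mult x y W21 = x W2 * y W1"
| "model_mult x y W13 = x W1 * y W3 + x W3 * y W1"
| "model_mult x y W23 = x W2 * y W3"
| "model_mult x y Wp = x W0 * y W21 + x W2 * y W01"
| "model_mult x y Wq = 2 * x W0 * y W13 + 2 * x W3 * y W01 + (x W01 - x W10) * y W3"
| "model_mult x y Wr = x W1 * y W23 + x W2 * y W13 + x W3 * y W21"
| "model_mult x y Wt = x W0 * y Wr + x W2 * y Wq / 2 + x W3 * y Wp + (x W01 - x W10) * y W23 / 2"
| "model_mult x y _ = 0"

definition model_scale :: "'k::field_char_0 \<Rightarrow> 'k model \<Rightarrow> 'k model" where
  "model_scale c x = (\<lambda>b. c * x b)"

interpretation model: k_algebra model_scale model_mult
  by (unfold_locales; rule ext; rename_tac b; case_tac b)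
    (simp_all add: model_scale_def algebra_simps add_divide_distrib diff_divide_distrib)

interpretation model: LS_A1_algebra model_scale model_mult
  by (unfold_locales; rule ext; rename_tac b; case_tac b)
    (simp_all add: model.associator_def algebra_simps add_divide_distrib diff_divide_distrib)

interpretation model_comm: lie_algebra model_scale model.commutator
  by (rule model.lie_admissible)

fun test_assignment :: "nat list \<Rightarrow> nat \<Rightarrow> 'k::field_char_0 model" where
  "test_assignment [a] i = (\<lambda>x. case x of X0 \<Rightarrow> of_bool (i = a) | _ \<Rightarrow> 0)"
| "test_assignment [a, b] i =
    (\<lambda>x. case x of Y0 \<Rightarrow> of_bool (i = a) | Y1 \<Rightarrow> of_bool (i = b) | _ \<Rightarrow> 0)"
| "test_assignment [a, b, c] i =
    (\<lambda>x. case x of Z0 \<Rightarrow> of_bool (i = a) | Z1 \<Rightarrow> of_bool (i = b) | Z2 \<Rightarrow> of_bool (i = c) | _ \<Rightarrow> 0)"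
| "test_assignment [a, b, c, d] i =
    (\<lambda>x. case x of W0 \<Rightarrow> of_bool (i = a) | W1 \<Rightarrow> of_bool (i = b) | W2 \<Rightarrow> of_bool (i = c)
      | W3 \<Rightarrow> of_bool (i = d) | _ \<Rightarrow> 0)"
| "test_assignment _ _ = 0"

fun test_coordinate :: "nat list \<Rightarrow> model_basis" where
  "test_coordinate [_] = X0"
| "test_coordinate [_, _] = Yt"
| "test_coordinate [_, _, _] = Zt"
| "test_coordinate _ = Wt"

lemma length_between_1_4_cases:
  assumes "1 \<le> length xs" and "length xs \<le> 4"
  obtains a where "xs = [a]" | a b where "xs = [a, b]" | a b c where "xs = [a, b, c]"
    | a b c d where "xs = [a, b, c, d]"
  using assms by (cases xs; cases "tl xs"; cases "tl (tl xs)"; cases "tl (tl (tl xs))";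
      cases "tl (tl (tl (tl xs)))") auto

lemma test_coordinate_left_normed:
  fixes u w :: "nat list"
  assumes "1 \<le> length w" "length w \<le> 4" "1 \<le> length u" "length u \<le> 4"
  shows "model_comm.left_normed (test_assignment w) u (test_coordinate w)
    = (\<Sum>(k, v)\<leftarrow>expand u. of_int k * of_bool (v = w) :: 'k::field_char_0)"
  using assms(1,2)
  by (cases rule: length_between_1_4_cases;
      use assms(3,4) in \<open>cases rule: length_between_1_4_cases\<close>)
    (simp_all add: commute_with_def model.commutator_def of_bool_conj algebra_simps)

lemma test_coordinate_eval:
  fixes t :: "'k::field_char_0 nterm"
  assumes "tdeg t \<le> 4" and "1 \<le> length w" and "length w \<le> 4"
  shows "model_comm.eval (test_assignment w) t (test_coordinate w) = coeff (assoc_expansion t) w"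
proof -
  have "model_comm.eval (test_assignment w) t (test_coordinate w)
      = (\<Sum>(c, u)\<leftarrow>left_normed_form t.
          c * model_comm.left_normed (test_assignment w) u (test_coordinate w))"
    by (simp add: model_comm.eval_left_normed_form model_comm.combination_def sum_list_apply
      model_scale_def split_def o_def)
  also have "\<dots> = (\<Sum>(c, u)\<leftarrow>left_normed_form t. c * (\<Sum>(k, v)\<leftarrow>expand u. of_int k * of_bool (v = w)))"
    using assms
    by (intro sum_list_map_cong)
      (force simp: test_coordinate_left_normed Suc_le_eq dest: left_normed_form_words)
  also have "\<dots> = coeff (assoc_expansion t) w"
    by (simp add: coeff_def assoc_expansion_def map_concat sum_list_concat_map sum_list_const_mult
      split_def o_def mult.assoc)
  finally show ?thesis .
qed

theorem mainTheorem6: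
  fixes f :: "('k::field_char_0) nterm"
  assumes "tdeg f \<le> 4"
    and "\<forall>\<sigma>. deriv LS_A1_ax (comm_eval \<sigma> f) Z"
  shows "deriv Lie_ax f Z"
proof -
  have "coeff (assoc_expansion f) w = 0" if "1 \<le> length w" and "length w \<le> tdeg f" for w
  proof -
    have "model.eval (test_assignment w) (comm_eval V f) = model.eval (test_assignment w) Z"
      using assms(2) model.eval_deriv model.eval_LS_A1_ax by blast
    then have "model_comm.eval (test_assignment w) f = 0"
      by (simp add: model.eval_comm_eval o_def)
    then show ?thesis
      using test_coordinate_eval [of f w] assms(1) that by simp
  qed
  then have "abs_free_lie f = 0"
    by (simp add: abs_free_lie_eq_eval free.eval_eq_0_if_coeff_eq_0)
  then show ?thesis
    by (simp add: zero_free_lie.abs_eq free_lie.abs_eq_iff)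
qed

end
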